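(* Let $U$ and $\widetilde{U}$ be as defined in the context, let $a\in\mathbb{N}_1$ and $l\in\mathbb{N}_1$ with $U^l(a)=a$. Then for every $x\in\mathbb{R}_0$ the following are equivalent: (i) the parity sequence $\mathcal{P}_{\widetilde U}(x)=(\lfloor \widetilde U^i(x)\rfloor \bmod 2)_{i\ge 0}$ is eventually periodic with period $\tilde s=(1-(a\bmod 2),\,1-(U(a)\bmod 2),\dots,1-(U^{l-1}(a)\bmod 2))$, i.e. there is $j\in\mathbb{N}_0$ such that $(\lfloor \widetilde U^{i}(x)\rfloor\bmod 2,\dots,\lfloor \widetilde U^{i+l-1}(x)\rfloor\bmod 2)=\tilde s$ for all $i=j+ml$, $m\in\mathbb{N}_0$; (ii) $\mathcal{T}_{\widetilde U}(x)$ tends to $\{U^t(a)\}$ from below, i.e. there is $j_0\in\mathbb{N}_0$ such that for every $j\in\{0,1,\dots,l-1\}$ the sequence $\big(\widetilde U^{kl}(\widetilde U^{j+j_0}(x))\big)_{k\ge 0}$ converges to $U^j(a)$ as $k\to\infty$ and all of its terms are strictly less than $U^j(a)$.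
   Context: $\mathbb{R}_0=\{x\ge0\}$, $\mathbb{R}_1=\{x\ge1\}$, $\mathbb{N}_0=\{0,1,2,\dots\}$, $\mathbb{N}_1=\{1,2,\dots\}$, $\lfloor x\rfloor$ is the floor. $U:\mathbb{R}_1\to\mathbb{R}_1$: $U(x)=x/2$ if $\lfloor x\rfloor$ even, $U(x)=(3x+1)/2$ if $\lfloor x\rfloor$ odd. $\widetilde U:\mathbb{R}_0\to\mathbb{R}_0$: $\widetilde U(x)=(3x+1)/2$ if $\lfloor x\rfloor$ even, $\widetilde U(x)=x/2$ if $\lfloor x\rfloor$ odd. Iterates: $f^0=\mathrm{id}$, $f^i=f\circ f^{i-1}$; $\mathcal{T}_f(x)=(f^i(x))_{i\ge0}$. *)

theory Defs
  imports Complex_Main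
begin

text \<open>U on R_1 (defined totally on real; only used on points >= 1).\<close>
definition U :: "real \<Rightarrow> real" where
  "U x = (if even \<lfloor>x\<rfloor> then x / 2 else (3 * x + 1) / 2)"

text \<open>U tilde on R_0 (defined totally on real; only used on points >= 0).\<close>
definition Ut :: "real \<Rightarrow> real" where
  "Ut x = (if even \<lfloor>x\<rfloor> then (3 * x + 1) / 2 else x / 2)"

end

theory Submission
  imports Defs
begin

(* For an integer n, Ut restricted to [n - 1, n) is the affine branch of U through n,
   with slope 1/2 if n is even and 3/2 if n is odd. Hence, as long as the floors of the
   Ut-orbit of z have parities complementary to those along the U-orbit of an integer b,
   the gap b - z is transported multiplicatively: after k steps it has been multiplied
   by the product of the slopes along the U-orbit of b. Over an l-cycle of U through
   b > 0 this product rho is < 1, since U^l b = rho b + (a positive contribution of the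
   odd steps), or rho = 2^-l if there is none. So the gaps shrink geometrically, and
   they stay positive because a point of [n, n + 1) has the wrong parity. Conversely,
   an orbit converging to the cycle from below eventually has floors U^k b - 1, which
   have the complementary parities. *)

definition U_slope :: "real \<Rightarrow> real" where
  "U_slope y = (if even \<lfloor>y\<rfloor> then 1/2 else 3/2)"

definition orbit_slope :: "real \<Rightarrow> nat \<Rightarrow> real" where
  "orbit_slope b k = (\<Prod>i<k. U_slope ((U ^^ i) b))"

definition complementary_parities :: "real \<Rightarrow> real \<Rightarrow> bool" where
  "complementary_parities z b \<longleftrightarrow> (\<forall>i. \<lfloor>(Ut ^^ i) z\<rfloor> mod 2 = 1 - \<lfloor>(U ^^ i) b\<rfloor> mod 2)"

definition tends_to_cycle_from_below :: "nat \<Rightarrow> real \<Rightarrow> real \<Rightarrow> bool" where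
  "tends_to_cycle_from_below l z b \<longleftrightarrow>
     (\<forall>j<l. ((\<lambda>k. (Ut ^^ (k * l)) ((Ut ^^ j) z)) \<longlonglongrightarrow> (U ^^ j) b) \<and>
            (\<forall>k. (Ut ^^ (k * l)) ((Ut ^^ j) z) < (U ^^ j) b))"

lemma U_Ints:
  assumes "y \<in> \<int>"
  shows "U y \<in> \<int>"
proof -
  obtain n where n: "y = of_int n"
    using assms Ints_cases by blast
  show ?thesis
  proof (cases "even n")
    case True
    then have "U y = of_int (n div 2)"
      by (auto simp: U_def n elim!: evenE)
    then show ?thesis by simp
  next
    case False
    then have "U y = of_int (3 * (n div 2) + 2)"
      by (auto simp: U_def n field_simps elim!: oddE)
    then show ?thesis by simp
  qed
qed

lemma funpow_U_Ints: "b \<in> \<int> \<Longrightarrow> (U ^^ i) b \<in> \<int>"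
  by (induction i) (auto intro: U_Ints)

lemma funpow_U_pos: "b > 0 \<Longrightarrow> (U ^^ i) b > 0"
  by (induction i) (auto simp: U_def)

lemma funpow_apply_funpow: "(f ^^ m) ((f ^^ n) x) = (f ^^ (m + n)) x"
  by (simp add: funpow_add)

lemma funpow_cycle_shift:
  assumes "(f ^^ l) b = b"
  shows "(f ^^ l) ((f ^^ j) b) = (f ^^ j) b"
proof -
  have "(f ^^ l) ((f ^^ j) b) = (f ^^ j) ((f ^^ l) b)"
    by (simp add: funpow_apply_funpow add.commute)
  with assms show ?thesis by simp
qed

lemma funpow_cycle_mult: "(f ^^ l) b = b \<Longrightarrow> (f ^^ (k * l)) b = b"
  using funpow_mod_eq[where f = f and n = l and x = b and m = "k * l"] by simp

lemma U_eq_affine: "U y = U_slope y * y + (if even \<lfloor>y\<rfloor> then 0 else 1/2)"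
  by (simp add: U_def U_slope_def)

lemma orbit_slope_pos: "orbit_slope b k > 0"
  by (simp add: orbit_slope_def U_slope_def prod_pos)

lemma orbit_slope_Suc: "orbit_slope b (Suc k) = orbit_slope b k * U_slope ((U ^^ k) b)"
  by (simp add: orbit_slope_def)

lemma orbit_slope_add: "orbit_slope b (k + n) = orbit_slope b k * orbit_slope ((U ^^ k) b) n"
proof (induction n)
  case 0
  show ?case by (simp add: orbit_slope_def)
next
  case (Suc n)
  have "(U ^^ (k + n)) b = (U ^^ n) ((U ^^ k) b)"
    by (simp add: funpow_apply_funpow add.commute)
  with Suc.IH show ?case
    by (simp add: orbit_slope_Suc)
qed

lemma orbit_slope_cycle_power:
  assumes "(U ^^ l) b = b"
  shows "orbit_slope b (m * l) = orbit_slope b l ^ m"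
proof (induction m)
  case 0
  show ?case by (simp add: orbit_slope_def)
next
  case (Suc m)
  have "orbit_slope b (Suc m * l) = orbit_slope b (l + m * l)"
    by (simp add: add.commute)
  also have "\<dots> = orbit_slope b l * orbit_slope b (m * l)"
    by (simp add: orbit_slope_add assms)
  finally show ?case by (simp add: Suc.IH)
qed

lemma orbit_slope_mult_le: "orbit_slope b k * b \<le> (U ^^ k) b"
proof (induction k)
  case 0
  show ?case by (simp add: orbit_slope_def)
next
  case (Suc k)
  have "orbit_slope b (Suc k) * b = U_slope ((U ^^ k) b) * (orbit_slope b k * b)"
    by (simp add: orbit_slope_Suc)
  also have "\<dots> \<le> U_slope ((U ^^ k) b) * (U ^^ k) b"
    using Suc.IH by (rule mult_left_mono) (simp add: U_slope_def)
  also have "\<dots> \<le> (U ^^ Suc k) b"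
    by (simp add: U_eq_affine[of "(U ^^ k) b"])
  finally show ?case .
qed

lemma orbit_slope_mult_less:
  assumes "i < k" "odd \<lfloor>(U ^^ i) b\<rfloor>"
  shows "orbit_slope b k * b < (U ^^ k) b"
  using assms
proof (induction k)
  case 0
  then show ?case by simp
next
  case (Suc k)
  define y where "y = (U ^^ k) b"
  have c: "U_slope y > 0"
    by (simp add: U_slope_def)
  have slope: "orbit_slope b (Suc k) * b = U_slope y * (orbit_slope b k * b)"
    by (simp add: orbit_slope_Suc y_def)
  have step: "(U ^^ Suc k) b = U_slope y * y + (if even \<lfloor>y\<rfloor> then 0 else 1/2)"
    by (simp add: U_eq_affine y_def)
  show ?case
  proof (cases "i < k")
    case True
    with Suc have "orbit_slope b k * b < y"
      by (simp add: y_def)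
    with c have "U_slope y * (orbit_slope b k * b) < U_slope y * y"
      by simp
    then show ?thesis
      unfolding slope step by simp
  next
    case False
    with Suc.prems have "odd \<lfloor>y\<rfloor>"
      by (simp add: y_def less_Suc_eq)
    moreover have "U_slope y * (orbit_slope b k * b) \<le> U_slope y * y"
      using c orbit_slope_mult_le[of b k] by (simp add: y_def)
    ultimately show ?thesis
      unfolding slope step by simp
  qed
qed

lemma orbit_slope_cycle_less_one:
  assumes "b > 0" "l \<ge> 1" "(U ^^ l) b = b"
  shows "orbit_slope b l < 1"
proof (cases "\<exists>i<l. odd \<lfloor>(U ^^ i) b\<rfloor>")
  case True
  then obtain i where "i < l" "odd \<lfloor>(U ^^ i) b\<rfloor>"
    by blast
  then have "orbit_slope b l * b < (U ^^ l) b"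
    by (rule orbit_slope_mult_less)
  with assms(1,3) show ?thesis by simp
next
  case False
  then have "orbit_slope b l = (1/2) ^ l"
    by (simp add: orbit_slope_def U_slope_def)
  also have "\<dots> < 1"
    using assms(2) by (simp add: power_less_one_iff)
  finally show ?thesis .
qed

lemma Ut_eq_U_branch:
  assumes "y \<in> \<int>" "\<lfloor>z\<rfloor> mod 2 = 1 - \<lfloor>y\<rfloor> mod 2"
  shows "Ut z = U y - U_slope y * (y - z)"
proof -
  have "even \<lfloor>z\<rfloor> \<longleftrightarrow> odd \<lfloor>y\<rfloor>"
    using assms(2) by presburger
  then show ?thesis
    by (simp add: U_def Ut_def U_slope_def field_simps)
qed

lemma funpow_Ut_shadow:
  assumes "b \<in> \<int>" "\<And>i. i < k \<Longrightarrow> \<lfloor>(Ut ^^ i) z\<rfloor> mod 2 = 1 - \<lfloor>(U ^^ i) b\<rfloor> mod 2"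
  shows "(Ut ^^ k) z = (U ^^ k) b - orbit_slope b k * (b - z)"
  using assms(2)
proof (induction k)
  case 0
  show ?case by (simp add: orbit_slope_def)
next
  case (Suc k)
  have IH: "(Ut ^^ k) z = (U ^^ k) b - orbit_slope b k * (b - z)"
    using Suc by simp
  have "(Ut ^^ Suc k) z = U ((U ^^ k) b) - U_slope ((U ^^ k) b) * ((U ^^ k) b - (Ut ^^ k) z)"
    using Ut_eq_U_branch[OF funpow_U_Ints[OF assms(1)] Suc.prems[of k]] by simp
  also have "\<dots> = (U ^^ Suc k) b - orbit_slope b (Suc k) * (b - z)"
    unfolding IH by (simp add: orbit_slope_Suc algebra_simps)
  finally show ?case .
qed

lemma complementary_parities_funpow:
  "complementary_parities z b \<Longrightarrow> complementary_parities ((Ut ^^ n) z) ((U ^^ n) b)"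
  unfolding complementary_parities_def by (simp add: funpow_apply_funpow)

lemma all_nat_iff_all_residues:
  assumes "l > (0::nat)"
  shows "(\<forall>i. P i) \<longleftrightarrow> (\<forall>m. \<forall>r<l. P (m * l + r))"
  using assms by (metis div_mult_mod_eq mod_less_divisor)

lemma complementary_parities_iff_blocks:
  assumes "l \<ge> 1" "(U ^^ l) b = b"
  shows "complementary_parities z b \<longleftrightarrow>
    (\<forall>m. \<forall>r<l. \<lfloor>(Ut ^^ (m * l + r)) z\<rfloor> mod 2 = 1 - \<lfloor>(U ^^ r) b\<rfloor> mod 2)"
proof -
  have periodic: "(U ^^ (m * l + r)) b = (U ^^ r) b" if "r < l" for m r
    using funpow_mod_eq[where f = U and n = l and x = b and m = "m * l + r"] assms(2) that
    by simp
  have "complementary_parities z b \<longleftrightarrow>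
    (\<forall>m. \<forall>r<l. \<lfloor>(Ut ^^ (m * l + r)) z\<rfloor> mod 2 = 1 - \<lfloor>(U ^^ (m * l + r)) b\<rfloor> mod 2)"
    unfolding complementary_parities_def using assms(1) by (intro all_nat_iff_all_residues) simp
  then show ?thesis
    using periodic by simp
qed

lemma floor_mod_2_below_int:
  assumes "of_int n - 1 < t" "t < of_int n"
  shows "\<lfloor>t\<rfloor> mod 2 = 1 - n mod 2"
proof -
  have "\<lfloor>t\<rfloor> = n - 1"
    using assms by (simp add: floor_eq_iff)
  then show ?thesis by presburger
qed

lemma complementary_parities_tendsto_from_below:
  assumes "b \<in> \<int>" "b > 0" "l \<ge> 1" "(U ^^ l) b = b" "complementary_parities z b"
  shows "(\<lambda>k. (Ut ^^ (k * l)) z) \<longlonglongrightarrow> b" and "(Ut ^^ (k * l)) z < b"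
proof -
  define \<rho> where "\<rho> = orbit_slope b l"
  have "0 < \<rho>" "\<rho> < 1"
    unfolding \<rho>_def using orbit_slope_pos orbit_slope_cycle_less_one assms(2-4) by auto
  have orbit: "(Ut ^^ (k * l)) z = b - \<rho> ^ k * (b - z)" for k
    using funpow_Ut_shadow[OF assms(1), of "k * l" z] assms(5)
    by (simp add: complementary_parities_def funpow_cycle_mult[OF assms(4)]
        orbit_slope_cycle_power[OF assms(4)] \<rho>_def)
  have gap_to_0: "(\<lambda>k. \<rho> ^ k * (b - z)) \<longlonglongrightarrow> 0"
    using \<open>0 < \<rho>\<close> \<open>\<rho> < 1\<close> by (intro tendsto_mult_left_zero LIMSEQ_power_zero) simp
  have "z < b"
  proof (rule ccontr)
    assume "\<not> z < b"
    have "\<forall>\<^sub>F k in sequentially. \<rho> ^ k * (b - z) > -1"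
      using gap_to_0 by (rule order_tendstoD) simp
    then obtain k where "\<rho> ^ k * (b - z) > -1"
      by (auto simp: eventually_sequentially)
    moreover have "\<rho> ^ k * (b - z) \<le> 0"
      using \<open>\<not> z < b\<close> \<open>0 < \<rho>\<close> by (simp add: mult_nonneg_nonpos)
    moreover obtain n where n: "b = of_int n"
      using assms(1) Ints_cases by blast
    ultimately have "\<lfloor>(Ut ^^ (k * l)) z\<rfloor> = n"
      unfolding orbit by (simp add: floor_eq_iff)
    moreover have "\<lfloor>(Ut ^^ (k * l)) z\<rfloor> mod 2 = 1 - n mod 2"
      using assms(5) funpow_cycle_mult[OF assms(4)]
      by (simp add: complementary_parities_def n)
    ultimately show False by presburger
  qed
  have "(\<lambda>k. b - \<rho> ^ k * (b - z)) \<longlonglongrightarrow> b - 0"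
    by (intro tendsto_diff tendsto_const gap_to_0)
  then show "(\<lambda>k. (Ut ^^ (k * l)) z) \<longlonglongrightarrow> b"
    by (simp add: orbit)
  show "(Ut ^^ (k * l)) z < b"
    using \<open>z < b\<close> \<open>0 < \<rho>\<close> by (simp add: orbit)
qed

lemma complementary_parities_tends_to_cycle:
  assumes "b \<in> \<int>" "b > 0" "l \<ge> 1" "(U ^^ l) b = b" "complementary_parities z b"
  shows "tends_to_cycle_from_below l z b"
  unfolding tends_to_cycle_from_below_def
  using complementary_parities_tendsto_from_below[OF funpow_U_Ints[OF assms(1)]
      funpow_U_pos[OF assms(2)] assms(3) funpow_cycle_shift[OF assms(4)]
      complementary_parities_funpow[OF assms(5)]]
  by blast

lemma tends_to_cycle_complementary_parities:
  assumes "b \<in> \<int>" "l \<ge> 1" "(U ^^ l) b = b" "tends_to_cycle_from_below l z b"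
  shows "\<exists>K. complementary_parities ((Ut ^^ (K * l)) z) b"
proof -
  have "\<forall>j\<in>{..<l}. \<forall>\<^sub>F k in sequentially. (U ^^ j) b - 1 < (Ut ^^ (k * l)) ((Ut ^^ j) z)"
    using assms(4) by (auto simp: tends_to_cycle_from_below_def intro: order_tendstoD)
  then have "\<forall>\<^sub>F k in sequentially. \<forall>j\<in>{..<l}. (U ^^ j) b - 1 < (Ut ^^ (k * l)) ((Ut ^^ j) z)"
    by (simp add: eventually_ball_finite)
  then obtain K where K: "\<And>k j. k \<ge> K \<Longrightarrow> j < l \<Longrightarrow> (U ^^ j) b - 1 < (Ut ^^ (k * l)) ((Ut ^^ j) z)"
    by (auto simp: eventually_sequentially)
  have "\<lfloor>(Ut ^^ (m * l + r)) ((Ut ^^ (K * l)) z)\<rfloor> mod 2 = 1 - \<lfloor>(U ^^ r) b\<rfloor> mod 2"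
    if "r < l" for m r
  proof -
    have "(Ut ^^ (m * l + r)) ((Ut ^^ (K * l)) z) = (Ut ^^ ((K + m) * l)) ((Ut ^^ r) z)"
      by (simp add: funpow_apply_funpow algebra_simps)
    moreover obtain n where "(U ^^ r) b = of_int n"
      using funpow_U_Ints[OF assms(1)] Ints_cases by blast
    moreover have "(Ut ^^ ((K + m) * l)) ((Ut ^^ r) z) < (U ^^ r) b"
      using assms(4) \<open>r < l\<close> by (simp add: tends_to_cycle_from_below_def)
    ultimately show ?thesis
      using K[of "K + m" r] \<open>r < l\<close> floor_mod_2_below_int by simp
  qed
  then show ?thesis
    using complementary_parities_iff_blocks[OF assms(2,3)] by blast
qed

theorem proposition2:
  fixes a l :: nat and x :: real
  assumes "a \<ge> 1" and "l \<ge> 1" and "(U ^^ l) (real a) = real a" and "x \<ge> 0"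
  shows "(\<exists>j::nat. \<forall>m::nat. \<forall>r<l.
            \<lfloor>(Ut ^^ (j + m * l + r)) x\<rfloor> mod 2 = 1 - (\<lfloor>(U ^^ r) (real a)\<rfloor> mod 2))
     \<longleftrightarrow>
         (\<exists>j0::nat. \<forall>j<l.
            ((\<lambda>k. (Ut ^^ (k * l)) ((Ut ^^ (j + j0)) x)) \<longlonglongrightarrow> (U ^^ j) (real a)) \<and>
            (\<forall>k. (Ut ^^ (k * l)) ((Ut ^^ (j + j0)) x) < (U ^^ j) (real a)))"
proof -
  (* The hypothesis x \<ge> 0 only records the domain of Ut; the argument does not need it. *)
  have a: "real a \<in> \<int>" "real a > 0"
    using assms(1) by simp_all
  have parities: "(\<exists>j::nat. \<forall>m::nat. \<forall>r<l.
            \<lfloor>(Ut ^^ (j + m * l + r)) x\<rfloor> mod 2 = 1 - (\<lfloor>(U ^^ r) (real a)\<rfloor> mod 2))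
      \<longleftrightarrow> (\<exists>j. complementary_parities ((Ut ^^ j) x) (real a))"
  proof -
    have "(Ut ^^ (j + m * l + r)) x = (Ut ^^ (m * l + r)) ((Ut ^^ j) x)" for j m r
      by (simp add: funpow_apply_funpow algebra_simps)
    then show ?thesis
      by (simp add: complementary_parities_iff_blocks[OF assms(2,3)])
  qed
  have "(\<exists>j. complementary_parities ((Ut ^^ j) x) (real a)) \<longleftrightarrow>
    (\<exists>j0. tends_to_cycle_from_below l ((Ut ^^ j0) x) (real a))"
  proof
    assume "\<exists>j. complementary_parities ((Ut ^^ j) x) (real a)"
    then show "\<exists>j0. tends_to_cycle_from_below l ((Ut ^^ j0) x) (real a)"
      using complementary_parities_tends_to_cycle[OF a assms(2,3)] by blast
  next
    assume "\<exists>j0. tends_to_cycle_from_below l ((Ut ^^ j0) x) (real a)"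
    then obtain j0 K where "complementary_parities ((Ut ^^ (K * l)) ((Ut ^^ j0) x)) (real a)"
      using tends_to_cycle_complementary_parities[OF a(1) assms(2,3)] by blast
    then show "\<exists>j. complementary_parities ((Ut ^^ j) x) (real a)"
      by (auto simp: funpow_apply_funpow)
  qed
  then show ?thesis
    unfolding parities by (simp add: tends_to_cycle_from_below_def funpow_apply_funpow)
qed

end
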